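(* Assume Assumption 1 and Assumption 2 with $\delta>1/10$. Conditioned on $S_L$ and $S_R$, for any node $u\in L$, the local clustering coefficient of $u$ in the projected graph satisfies, as $n_L,n_R\to\infty$, $$C(u)=\frac{1}{1+\frac{M_{R2}^2}{M_{R3}M_{R1}}\,w_u}+o(1).$$
   Context: Model: left nodes $L$ ($|L|=n_L$), right nodes $R$ ($|R|=n_R$), weight sequences $S_L=(w_u)_{u\in L}$, $S_R=(w_v)_{v\in R}$ of positive reals; $M_{Lk}=\frac1{n_L}\sum_{u\in L}w_u^k$, $M_{Rk}=\frac1{n_R}\sum_{v\in R}w_v^k$. The random bipartite graph $G_b=(L\sqcup R,E_b)$ contains each edge $(u,v)$, $u\in L$, $v\in R$, independently with probability $\min\left(\frac{w_uw_v}{n_RM_{R1}},1\right)$. The projected graph is $G=(L,E)$ with $(u,u')\in E$ for distinct $u,u'\in L$ iff there is $z\in R$ with $(u,z),(u',z)\in E_b$. Local clustering coefficient (conditional-probability version): $C(u)=\Pr[(v,w)\in E\mid (u,v)\in E,(u,w)\in E]$, where $v,w$ are distinct nodes of $L\setminus\{u\}$ forming a random wedge centered at $u$ (i.e. $v,w$ chosen uniformly at random, independently of the graph, and conditioned on both edges $(u,v),(u,w)$ being present), all probabilities conditional on $S_L,S_R$. Assumption 1: $\frac{w_uw_v}{n_RM_{R1}}\le1$ for all $u\in L,v\in R$. Assumption 2 (parameter $\delta>0$), as $n_L,n_R\to\infty$: $\max(S_L\cup S_R)=O(n_R^{1/2-\delta})$, $\min S_L=\Omega(1)$, $M_{R2}=O(M_{R1}^2)$,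 $M_{R4}=O(n_R^{1-2\delta})$. *)

theory Defs
  imports "HOL-Probability.Probability" "HOL-Library.Landau_Symbols"
begin

definition moment :: "nat \<Rightarrow> (nat \<Rightarrow> real) \<Rightarrow> nat \<Rightarrow> real" where
  "moment n w k = (1 / real n) * (\<Sum>u<n. w u ^ k)"

definition edge_prob :: "nat \<Rightarrow> (nat \<Rightarrow> real) \<Rightarrow> (nat \<Rightarrow> real) \<Rightarrow> nat \<Rightarrow> nat \<Rightarrow> real" where
  "edge_prob nR wL wR u v = min (wL u * wR v / (real nR * moment nR wR 1)) 1"

definition bip_graph :: "nat \<Rightarrow> nat \<Rightarrow> (nat \<Rightarrow> real) \<Rightarrow> (nat \<Rightarrow> real) \<Rightarrow> (nat \<times> nat) set pmf" where
  "bip_graph nL nR wL wR =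
     map_pmf (\<lambda>f. {e. f e})
       (Pi_pmf ({..<nL} \<times> {..<nR}) False
          (\<lambda>(u, v). bernoulli_pmf (edge_prob nR wL wR u v)))"

definition proj_edge :: "nat \<Rightarrow> (nat \<times> nat) set \<Rightarrow> nat \<Rightarrow> nat \<Rightarrow> bool" where
  "proj_edge nR Eb u u' \<longleftrightarrow> u \<noteq> u' \<and> (\<exists>z<nR. (u, z) \<in> Eb \<and> (u', z) \<in> Eb)"

definition wedges :: "nat \<Rightarrow> nat \<Rightarrow> (nat \<times> nat) set" where
  "wedges nL u = {(v, w). v < nL \<and> w < nL \<and> v \<noteq> u \<and> w \<noteq> u \<and> v \<noteq> w}"

definition wedge_graph :: "nat \<Rightarrow> nat \<Rightarrow> (nat \<Rightarrow> real) \<Rightarrow> (nat \<Rightarrow> real) \<Rightarrow> nat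
    \<Rightarrow> ((nat \<times> nat) \<times> (nat \<times> nat) set) pmf" where
  "wedge_graph nL nR wL wR u = pair_pmf (pmf_of_set (wedges nL u)) (bip_graph nL nR wL wR)"

definition clust :: "nat \<Rightarrow> nat \<Rightarrow> (nat \<Rightarrow> real) \<Rightarrow> (nat \<Rightarrow> real) \<Rightarrow> nat \<Rightarrow> real" where
  "clust nL nR wL wR u =
     (let P = measure_pmf.prob (wedge_graph nL nR wL wR u);
          B = {((v, w), Eb). proj_edge nR Eb u v \<and> proj_edge nR Eb u w};
          A = {((v, w), Eb). proj_edge nR Eb v w}
      in P (A \<inter> B) / P B)"

end

theory Submission
  imports Defs
begin

text \<open>
  Given a wedge (v, w) at u, the wedge event and the triangle event are monotone events about
  the independent edges of the bipartite graph, and their probabilities can be expanded by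
  inclusion-exclusion over the right nodes.  Let e = W^2 M2 / (nR M1^2), a bound for the
  expected number of common neighbours of two left nodes.  The triangle probability is
  wv ww g (1 + O(e)) with g = wu M3 / (nR^2 M1^3), coming from one right node adjacent to
  u, v and w; the wedge probability is wv ww (g + h) (1 + O(e + sqrt e)) with
  h = wu^2 M2^2 / (nR^2 M1^4), coming from two different common neighbours.  The factor wv ww
  cancels when averaging over wedges, which leaves g / (g + h) = 1 / (1 + wu M2^2 / (M3 M1)),
  and Assumption 2 gives e = O(nR^(-2 delta)).
\<close>

lemma measure_pmf_prob_Compl: "measure_pmf.prob M (- A) = 1 - measure_pmf.prob M A"
  using measure_pmf.prob_compl[of A M] by (simp add: Compl_eq_Diff_UNIV)

lemma measure_pmf_prob_Un:
  "measure_pmf.prob M (A \<union> B)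
     = measure_pmf.prob M A + measure_pmf.prob M B - measure_pmf.prob M (A \<inter> B)"
  by (simp add: measure_pmf.finite_measure_Union' measure_pmf.finite_measure_Diff' Int_commute)

lemma measure_pmf_prob_pair_Times:
  "measure_pmf.prob (pair_pmf M N) (A \<times> B) = measure_pmf.prob M A * measure_pmf.prob N B"
proof -
  let ?M = "pair_pmf M N"
  have "measure_pmf.prob ?M (A \<times> B) = measure_pmf.prob ?M ((A \<times> B) \<inter> set_pmf ?M)"
    by (rule measure_Int_set_pmf[symmetric])
  also have "(A \<times> B) \<inter> set_pmf ?M = (A \<inter> set_pmf M) \<times> (B \<inter> set_pmf N)"
    by auto
  also have "measure_pmf.prob ?M \<dots>
      = measure_pmf.prob M (A \<inter> set_pmf M) * measure_pmf.prob N (B \<inter> set_pmf N)"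
    by (rule measure_pmf_prob_product) (auto intro: countable_subset[OF _ countable_set_pmf])
  finally show ?thesis by (simp add: measure_Int_set_pmf)
qed

lemma measure_pmf_prob_pair_pmf_of_set:
  assumes "finite W" "W \<noteq> {}"
  shows "measure_pmf.prob (pair_pmf (pmf_of_set W) N) S
       = (\<Sum>x\<in>W. measure_pmf.prob N {y. (x, y) \<in> S}) / card W"
proof -
  let ?M = "pair_pmf (pmf_of_set W) N"
  have "measure_pmf.prob ?M S = measure_pmf.prob ?M (S \<inter> set_pmf ?M)"
    by (rule measure_Int_set_pmf[symmetric])
  also have "S \<inter> set_pmf ?M = (\<Union>x\<in>W. {x} \<times> {y. (x, y) \<in> S}) \<inter> set_pmf ?M"
    using assms by auto
  also have "measure_pmf.prob ?M \<dots> = measure_pmf.prob ?M (\<Union>x\<in>W. {x} \<times> {y. (x, y) \<in> S})"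
    by (rule measure_Int_set_pmf)
  also have "\<dots> = (\<Sum>x\<in>W. measure_pmf.prob ?M ({x} \<times> {y. (x, y) \<in> S}))"
    by (rule measure_pmf.finite_measure_finite_Union)
      (use assms in \<open>auto simp: disjoint_family_on_def\<close>)
  also have "\<dots> = (\<Sum>x\<in>W. measure_pmf.prob N {y. (x, y) \<in> S} / card W)"
    using assms by (intro sum.cong refl) (simp add: measure_pmf_prob_pair_Times measure_pmf_of_set)
  finally show ?thesis by (simp add: sum_divide_distrib)
qed

lemma one_minus_sum_le_prod_one_minus:
  fixes y :: "'a \<Rightarrow> real"
  assumes "finite A" "\<And>i. i \<in> A \<Longrightarrow> 0 \<le> y i \<and> y i \<le> 1"
  shows "1 - (\<Sum>i\<in>A. y i) \<le> (\<Prod>i\<in>A. 1 - y i)"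
  using assms
proof (induction rule: finite_induct)
  case (insert a A)
  have "0 \<le> (\<Sum>i\<in>A. y i)" using insert by (auto intro!: sum_nonneg)
  then have "1 - (y a + (\<Sum>i\<in>A. y i)) \<le> (1 - y a) * (1 - (\<Sum>i\<in>A. y i))"
    using insert.prems by (simp add: algebra_simps)
  also have "\<dots> \<le> (1 - y a) * (\<Prod>i\<in>A. 1 - y i)"
    using insert by (intro mult_left_mono) auto
  finally show ?case using insert by simp
qed simp

lemma prod_one_minus_le_bonferroni:
  fixes y :: "'a \<Rightarrow> real"
  assumes "finite A" "\<And>i. i \<in> A \<Longrightarrow> 0 \<le> y i \<and> y i \<le> 1"
  shows "(\<Prod>i\<in>A. 1 - y i) \<le> 1 - (\<Sum>i\<in>A. y i) + (\<Sum>i\<in>A. y i)^2 / 2"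
  using assms
proof (induction rule: finite_induct)
  case (insert a A)
  define s where "s = (\<Sum>i\<in>A. y i)"
  have "0 \<le> s" using insert by (auto intro!: sum_nonneg simp: s_def)
  have "(1 - y a) * (\<Prod>i\<in>A. 1 - y i) \<le> (1 - y a) * (1 - s + s^2/2)"
    using insert by (intro mult_left_mono) (auto simp: s_def)
  also have "\<dots> \<le> 1 - (y a + s) + (y a + s)^2/2"
    using insert.prems \<open>0 \<le> s\<close> by (simp add: algebra_simps power2_eq_square)
  finally show ?case using insert by (simp add: s_def)
qed simp

lemma sum_mult_one_minus_sum_le:
  fixes y :: "'a \<Rightarrow> real"
  assumes "finite A" "\<And>i. i \<in> A \<Longrightarrow> 0 \<le> y i \<and> y i \<le> 1"
  shows "(\<Sum>i\<in>A. y i) * (1 - (\<Sum>i\<in>A. y i)) \<le> 1 - (\<Prod>i\<in>A. 1 - y i)"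
proof -
  have "(\<Prod>i\<in>A. 1 - y i) \<le> 1 - (\<Sum>i\<in>A. y i) + (\<Sum>i\<in>A. y i)^2 / 2"
    using prod_one_minus_le_bonferroni[of A y] assms by blast
  moreover have "0 \<le> (\<Sum>i\<in>A. y i) * (\<Sum>i\<in>A. y i)" by simp
  ultimately show ?thesis
    unfolding power2_eq_square right_diff_distrib mult_1_right by linarith
qed

lemma prod_diff_le_sum_diff:
  fixes x y :: "'a \<Rightarrow> real"
  assumes "finite A" "\<And>i. i \<in> A \<Longrightarrow> 0 \<le> x i \<and> x i \<le> y i \<and> y i \<le> 1"
  shows "(\<Prod>i\<in>A. y i) - (\<Prod>i\<in>A. x i) \<le> (\<Sum>i\<in>A. y i - x i)"
  using assms
proof (induction rule: finite_induct)
  case (insert a A)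
  define P where "P = (\<Prod>i\<in>A. x i)"
  define Q where "Q = (\<Prod>i\<in>A. y i)"
  have P: "0 \<le> P" "P \<le> Q" "Q \<le> 1"
    using insert.prems unfolding P_def Q_def
    by (auto intro!: prod_nonneg prod_mono prod_le_1 dest: order_trans)
  have a: "0 \<le> x a" "x a \<le> y a" "y a \<le> 1" using insert.prems by auto
  have "y a * Q - x a * P = y a * (Q - P) + (y a - x a) * P" by (simp add: algebra_simps)
  also have "\<dots> \<le> 1 * (Q - P) + (y a - x a) * 1"
  proof (rule add_mono)
    show "y a * (Q - P) \<le> 1 * (Q - P)" using P a by (intro mult_right_mono) auto
    show "(y a - x a) * P \<le> (y a - x a) * 1" using P a by (intro mult_left_mono) auto
  qed
  also have "\<dots> \<le> (\<Sum>i\<in>A. y i - x i) + (y a - x a)"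
    using insert by (simp add: P_def Q_def)
  finally show ?case using insert by (simp add: P_def Q_def)
qed simp

lemma sum_diff_mult_prod_le_prod_diff:
  fixes x y :: "'a \<Rightarrow> real"
  assumes "finite A" "\<And>i. i \<in> A \<Longrightarrow> 0 \<le> x i \<and> x i \<le> y i \<and> y i \<le> 1"
  shows "(\<Sum>i\<in>A. y i - x i) * (\<Prod>i\<in>A. x i) \<le> (\<Prod>i\<in>A. y i) - (\<Prod>i\<in>A. x i)"
  using assms
proof (induction rule: finite_induct)
  case (insert a A)
  define S where "S = (\<Sum>i\<in>A. y i - x i)"
  define P where "P = (\<Prod>i\<in>A. x i)"
  define Q where "Q = (\<Prod>i\<in>A. y i)"
  have IH: "S * P \<le> Q - P" using insert by (auto simp: S_def P_def Q_def)
  have P: "0 \<le> P" "P \<le> 1" "0 \<le> S"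
    using insert.prems unfolding P_def S_def
    by (auto intro!: prod_nonneg prod_le_1 sum_nonneg dest: order_trans)
  have a: "0 \<le> x a" "x a \<le> y a" "y a \<le> 1" using insert.prems by auto
  have "(y a - x a + S) * (x a * P) = x a * (S * P) + (y a - x a) * x a * P"
    by (simp add: algebra_simps)
  also have "\<dots> \<le> y a * (Q - P) + (y a - x a) * 1 * P"
  proof (rule add_mono)
    show "x a * (S * P) \<le> y a * (Q - P)"
      using IH P a by (meson mult_mono order.trans mult_nonneg_nonneg)
    show "(y a - x a) * x a * P \<le> (y a - x a) * 1 * P"
      using P a by (intro mult_right_mono mult_left_mono) auto
  qed
  also have "\<dots> = y a * Q - x a * P" by (simp add: algebra_simps)
  finally show ?case using insert by (simp add: S_def P_def Q_def)
qed simp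

lemma le_sum_divide_sum:
  fixes c F :: "'a \<Rightarrow> real"
  assumes "0 < sum c A" "\<And>i. i \<in> A \<Longrightarrow> c i * L \<le> F i"
  shows "L \<le> sum F A / sum c A"
proof -
  have "sum c A * L \<le> sum F A"
    unfolding sum_distrib_right by (rule sum_mono) (use assms in auto)
  then show ?thesis using assms(1) by (simp add: pos_le_divide_eq mult.commute)
qed

lemma sum_divide_sum_le:
  fixes c F :: "'a \<Rightarrow> real"
  assumes "0 < sum c A" "\<And>i. i \<in> A \<Longrightarrow> F i \<le> c i * U"
  shows "sum F A / sum c A \<le> U"
proof -
  have "sum F A \<le> sum c A * U"
    unfolding sum_distrib_right by (rule sum_mono) (use assms in auto)
  then show ?thesis using assms(1) by (simp add: pos_divide_le_eq mult.commute)
qed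

locale bernoulli_field =
  fixes X :: "'a set" and Z :: "'b set" and q :: "'a \<times> 'b \<Rightarrow> real"
  assumes finite_X: "finite X" and finite_Z: "finite Z"
    and q_range: "\<And>x z. x \<in> X \<Longrightarrow> z \<in> Z \<Longrightarrow> 0 \<le> q (x, z) \<and> q (x, z) \<le> 1"
begin

definition field :: "'b set \<Rightarrow> ('a \<times> 'b \<Rightarrow> bool) pmf" where
  "field Z' = Pi_pmf (X \<times> Z') False (\<lambda>e. bernoulli_pmf (q e))"

abbreviation Pr :: "('a \<times> 'b \<Rightarrow> bool) set \<Rightarrow> real" where
  "Pr \<equiv> measure_pmf.prob (field Z)"

definition common_neighbour :: "'a set \<Rightarrow> ('a \<times> 'b \<Rightarrow> bool) \<Rightarrow> bool" where
  "common_neighbour S f \<longleftrightarrow> (\<exists>z\<in>Z. \<forall>x\<in>S. f (x, z))"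

lemma prob_field_all:
  assumes "Z' \<subseteq> Z" "S \<subseteq> X \<times> Z'"
  shows "measure_pmf.prob (field Z') {f. \<forall>e\<in>S. f e} = (\<Prod>e\<in>S. q e)"
proof -
  have fin: "finite (X \<times> Z')"
    using assms(1) finite_X finite_Z by (auto intro: finite_subset)
  have "{f. \<forall>e\<in>S. f e} = Pi (X \<times> Z') (\<lambda>e. if e \<in> S then {True} else UNIV)"
    using assms(2) by (auto simp: Pi_def)
  then have "measure_pmf.prob (field Z') {f. \<forall>e\<in>S. f e}
      = (\<Prod>e\<in>X \<times> Z'. measure_pmf.prob (bernoulli_pmf (q e)) (if e \<in> S then {True} else UNIV))"
    by (simp add: field_def measure_Pi_pmf_Pi fin)
  also have "\<dots> = (\<Prod>e\<in>X \<times> Z'. if e \<in> S then q e else 1)"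
    using assms q_range by (intro prod.cong refl) (auto simp: measure_pmf_single)
  also have "\<dots> = (\<Prod>e\<in>S. q e)"
    using assms(2) fin by (simp add: prod.If_cases Int_absorb1)
  finally show ?thesis .
qed

text \<open>A column event is a predicate on
  \<open>\<lambda>x. x \<in> X \<and> f (x, z)\<close>, so that it cannot inspect entries outside the support of the field.\<close>

lemma prob_field_columns:
  assumes "Z' \<subseteq> Z"
  shows "measure_pmf.prob (field Z') {f. \<forall>z\<in>Z'. P z (\<lambda>x. x \<in> X \<and> f (x, z))}
       = (\<Prod>z\<in>Z'. measure_pmf.prob (field {z}) {f. P z (\<lambda>x. x \<in> X \<and> f (x, z))})"
proof -
  have "finite Z'" using assms finite_Z by (rule finite_subset)
  then show ?thesis
  proof (induction rule: finite_induct)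
    case (insert z Z0)
    let ?h = "\<lambda>(f, g) e. if e \<in> X \<times> {z} then f e else g e"
    let ?Ez = "{f. P z (\<lambda>x. x \<in> X \<and> f (x, z))}"
    let ?E = "\<lambda>Z1. {f. \<forall>z'\<in>Z1. P z' (\<lambda>x. x \<in> X \<and> f (x, z'))}"
    have "X \<times> insert z Z0 = X \<times> {z} \<union> X \<times> Z0" by auto
    then have "field (insert z Z0) = map_pmf ?h (pair_pmf (field {z}) (field Z0))"
      unfolding field_def by (simp only:) (rule Pi_pmf_union, use finite_X insert.hyps in auto)
    moreover have "?h -` ?E (insert z Z0) = ?Ez \<times> ?E Z0"
    proof -
      have "(\<lambda>x. x \<in> X \<and> (if (x, z) \<in> X \<times> {z} then f (x, z) else g (x, z)))
          = (\<lambda>x. x \<in> X \<and> f (x, z))"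
        for f g :: "'a \<times> 'b \<Rightarrow> bool" by auto
      moreover have "(\<lambda>x. x \<in> X \<and> (if (x, z') \<in> X \<times> {z} then f (x, z') else g (x, z')))
          = (\<lambda>x. x \<in> X \<and> g (x, z'))"
        if "z' \<in> Z0" for f g :: "'a \<times> 'b \<Rightarrow> bool" and z'
        using insert.hyps that by auto
      ultimately show ?thesis by (auto simp: case_prod_unfold)
    qed
    ultimately have "measure_pmf.prob (field (insert z Z0)) (?E (insert z Z0))
        = measure_pmf.prob (field {z}) ?Ez * measure_pmf.prob (field Z0) (?E Z0)"
      by (simp add: measure_pmf_prob_pair_Times)
    then show ?case using insert by simp
  qed simp
qed

lemma prob_column_avoids:
  assumes "z \<in> Z" "S \<subseteq> X" "T \<subseteq> X"
  shows "measure_pmf.prob (field {z}) {f. \<not> (\<forall>x\<in>S. f (x, z)) \<and> \<not> (\<forall>x\<in>T. f (x, z))}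
       = 1 - (\<Prod>x\<in>S. q (x, z)) - (\<Prod>x\<in>T. q (x, z)) + (\<Prod>x\<in>S \<union> T. q (x, z))"
proof -
  have inj: "inj_on (\<lambda>x. (x, z)) A" for A :: "'a set" by (auto simp: inj_on_def)
  have all: "measure_pmf.prob (field {z}) {f. \<forall>x\<in>A. f (x, z)} = (\<Prod>x\<in>A. q (x, z))" if "A \<subseteq> X" for A
  proof -
    have "{f. \<forall>x\<in>A. f (x, z)} = {f. \<forall>e\<in>(\<lambda>x. (x, z)) ` A. f e}" by auto
    also have "measure_pmf.prob (field {z}) \<dots> = (\<Prod>e\<in>(\<lambda>x. (x, z)) ` A. q e)"
      using assms(1) that by (intro prob_field_all) auto
    finally show ?thesis by (simp add: prod.reindex[OF inj])
  qed
  have compl: "{f. \<not> (\<forall>x\<in>S. f (x, z)) \<and> \<not> (\<forall>x\<in>T. f (x, z))}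
      = - ({f. \<forall>x\<in>S. f (x, z)} \<union> {f. \<forall>x\<in>T. f (x, z)})"
    by auto
  have inter: "{f. \<forall>x\<in>S. f (x, z)} \<inter> {f. \<forall>x\<in>T. f (x, z)} = {f. \<forall>x\<in>S \<union> T. f (x, z)}"
    by auto
  have "S \<union> T \<subseteq> X" using assms by simp
  then show ?thesis
    unfolding compl measure_pmf_prob_Compl measure_pmf_prob_Un inter
    using all assms by simp
qed

lemma prob_no_common_neighbours:
  assumes "S \<subseteq> X" "T \<subseteq> X"
  shows "Pr {f. \<not> common_neighbour S f \<and> \<not> common_neighbour T f}
       = (\<Prod>z\<in>Z. 1 - (\<Prod>x\<in>S. q (x, z)) - (\<Prod>x\<in>T. q (x, z)) + (\<Prod>x\<in>S \<union> T. q (x, z)))"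
proof -
  let ?P = "\<lambda>z g. \<not> (\<forall>x\<in>S. g x) \<and> \<not> (\<forall>x\<in>T. g x)"
  have "{f. \<not> common_neighbour S f \<and> \<not> common_neighbour T f}
      = {f. \<forall>z\<in>Z. ?P z (\<lambda>x. x \<in> X \<and> f (x, z))}"
    using assms by (auto simp: common_neighbour_def)
  also have "Pr \<dots> = (\<Prod>z\<in>Z. measure_pmf.prob (field {z}) {f. ?P z (\<lambda>x. x \<in> X \<and> f (x, z))})"
    by (rule prob_field_columns) simp
  also have "\<dots> = (\<Prod>z\<in>Z. measure_pmf.prob (field {z}) {f. \<not> (\<forall>x\<in>S. f (x, z)) \<and> \<not> (\<forall>x\<in>T. f (x, z))})"
    using assms by (intro prod.cong refl arg_cong[where f = "measure_pmf.prob _"]) auto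
  also have "\<dots> = (\<Prod>z\<in>Z. 1 - (\<Prod>x\<in>S. q (x, z)) - (\<Prod>x\<in>T. q (x, z)) + (\<Prod>x\<in>S \<union> T. q (x, z)))"
    using assms by (intro prod.cong refl prob_column_avoids)
  finally show ?thesis .
qed

lemma prob_common_neighbour:
  assumes "S \<subseteq> X"
  shows "Pr {f. common_neighbour S f} = 1 - (\<Prod>z\<in>Z. 1 - (\<Prod>x\<in>S. q (x, z)))"
proof -
  have "{f. common_neighbour S f} = - {f. \<not> common_neighbour S f \<and> \<not> common_neighbour S f}" by auto
  then show ?thesis
    using prob_no_common_neighbours[OF assms assms] by (simp add: measure_pmf_prob_Compl)
qed

lemma prob_common_neighbours:
  assumes "S \<subseteq> X" "T \<subseteq> X"
  shows "Pr {f. common_neighbour S f \<and> common_neighbour T f}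
       = 1 - (\<Prod>z\<in>Z. 1 - (\<Prod>x\<in>S. q (x, z))) - (\<Prod>z\<in>Z. 1 - (\<Prod>x\<in>T. q (x, z)))
           + (\<Prod>z\<in>Z. 1 - (\<Prod>x\<in>S. q (x, z)) - (\<Prod>x\<in>T. q (x, z)) + (\<Prod>x\<in>S \<union> T. q (x, z)))"
proof -
  have compl: "{f. common_neighbour S f \<and> common_neighbour T f}
      = - ({f. \<not> common_neighbour S f} \<union> {f. \<not> common_neighbour T f})"
    by auto
  have inter: "{f. \<not> common_neighbour S f} \<inter> {f. \<not> common_neighbour T f}
      = {f. \<not> common_neighbour S f \<and> \<not> common_neighbour T f}"
    by auto
  have none: "Pr {f. \<not> common_neighbour A f} = (\<Prod>z\<in>Z. 1 - (\<Prod>x\<in>A. q (x, z)))"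
    if "A \<subseteq> X" for A
    using prob_no_common_neighbours[OF that that] by simp
  show ?thesis
    unfolding compl measure_pmf_prob_Compl measure_pmf_prob_Un inter
    using none assms prob_no_common_neighbours[OF assms] by simp
qed

end

locale wedge_field = bernoulli_field X Z q
  for X :: "'a set" and Z :: "'b set" and q :: "'a \<times> 'b \<Rightarrow> real" +
  fixes u v w :: 'a
  assumes in_X: "u \<in> X" "v \<in> X" "w \<in> X"
    and distinct: "u \<noteq> v" "u \<noteq> w" "v \<noteq> w"
begin

definition "p_uv z = q (u, z) * q (v, z)"
definition "p_uw z = q (u, z) * q (w, z)"
definition "p_vw z = q (v, z) * q (w, z)"
definition "p_uvw z = q (u, z) * q (v, z) * q (w, z)"

definition "s_uv = sum p_uv Z"
definition "s_uw = sum p_uw Z"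
definition "s_vw = sum p_vw Z"
definition "s_uvw = sum p_uvw Z"
definition "s_uv_uw = (\<Sum>z\<in>Z. p_uv z * p_uw z)"

definition "wedge_event = {f. common_neighbour {u, v} f \<and> common_neighbour {u, w} f}"
definition "triangle_event =
  {f. common_neighbour {v, w} f \<and> common_neighbour {u, v} f \<and> common_neighbour {u, w} f}"

lemma p_bounds:
  assumes "z \<in> Z"
  shows "0 \<le> p_uv z" "p_uv z \<le> 1" "0 \<le> p_uw z" "p_uw z \<le> 1" "0 \<le> p_vw z" "p_vw z \<le> 1"
    "0 \<le> p_uvw z" "p_uvw z \<le> p_uv z" "p_uv z * p_uw z \<le> p_uvw z"
proof -
  have q: "0 \<le> q (x, z)" "q (x, z) \<le> 1" if "x \<in> X" for x
    using q_range[OF that assms] by auto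
  note qu = q[OF in_X(1)] and qv = q[OF in_X(2)] and qw = q[OF in_X(3)]
  show "0 \<le> p_uv z" "0 \<le> p_uw z" "0 \<le> p_vw z" "0 \<le> p_uvw z"
    using qu qv qw by (simp_all add: p_uv_def p_uw_def p_vw_def p_uvw_def)
  show "p_uv z \<le> 1" "p_uw z \<le> 1" "p_vw z \<le> 1"
    using qu qv qw by (simp_all add: p_uv_def p_uw_def p_vw_def mult_le_one)
  show "p_uvw z \<le> p_uv z"
    using qu qv qw by (simp add: p_uv_def p_uvw_def mult_left_le)
  have "p_uv z * p_uw z = p_uvw z * q (u, z)"
    by (simp add: p_uv_def p_uw_def p_uvw_def mult_ac)
  also have "\<dots> \<le> p_uvw z"
    using qu qv qw by (simp add: p_uvw_def mult_left_le)
  finally show "p_uv z * p_uw z \<le> p_uvw z" .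
qed

lemma s_nonneg: "0 \<le> s_uv" "0 \<le> s_uw" "0 \<le> s_vw" "0 \<le> s_uvw" "s_uv_uw \<le> s_uvw" "0 \<le> s_uv_uw"
  using p_bounds
  by (auto simp: s_uv_def s_uw_def s_vw_def s_uvw_def s_uv_uw_def intro!: sum_nonneg sum_mono)

lemma s_uvw_le_s_uv: "s_uvw \<le> s_uv"
  unfolding s_uvw_def s_uv_def using p_bounds by (intro sum_mono) auto

lemma column_factor_bounds:
  assumes "z \<in> Z"
  shows "0 \<le> (1 - p_uv z) * (1 - p_uw z)"
    and "(1 - p_uv z) * (1 - p_uw z) \<le> 1 - p_uv z - p_uw z + p_uvw z"
    and "1 - p_uv z - p_uw z + p_uvw z \<le> 1"
proof -
  note p = p_bounds[OF assms]
  show "0 \<le> (1 - p_uv z) * (1 - p_uw z)"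
    using p by (intro mult_nonneg_nonneg) auto
  have "(1 - p_uv z) * (1 - p_uw z) = 1 - p_uv z - p_uw z + p_uv z * p_uw z"
    by (simp add: algebra_simps)
  then show "(1 - p_uv z) * (1 - p_uw z) \<le> 1 - p_uv z - p_uw z + p_uvw z"
    using p by linarith
  show "1 - p_uv z - p_uw z + p_uvw z \<le> 1"
    using p by linarith
qed

lemma p_uvw_range: "z \<in> Z \<Longrightarrow> 0 \<le> p_uvw z \<and> p_uvw z \<le> 1"
  using p_bounds[of z] by linarith

text \<open>The first summand is what independent edges (u, v) and (u, w) would give; the second
  is the positive correlation caused by the shared endpoint u.\<close>

lemma prob_wedge_event:
  "Pr wedge_event
     = (1 - (\<Prod>z\<in>Z. 1 - p_uv z)) * (1 - (\<Prod>z\<in>Z. 1 - p_uw z))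
       + ((\<Prod>z\<in>Z. 1 - p_uv z - p_uw z + p_uvw z) - (\<Prod>z\<in>Z. (1 - p_uv z) * (1 - p_uw z)))"
proof -
  have "{u, v} \<union> {u, w} = {u, v, w}" by auto
  then have "Pr wedge_event
      = 1 - (\<Prod>z\<in>Z. 1 - p_uv z) - (\<Prod>z\<in>Z. 1 - p_uw z) + (\<Prod>z\<in>Z. 1 - p_uv z - p_uw z + p_uvw z)"
    unfolding wedge_event_def using in_X distinct
    by (simp add: prob_common_neighbours p_uv_def p_uw_def p_uvw_def mult_ac)
  then show ?thesis by (simp only: prod.distrib) (simp add: algebra_simps)
qed

lemma wedge_correlation_bounds:
  "(s_uvw - s_uv_uw) * (\<Prod>z\<in>Z. (1 - p_uv z) * (1 - p_uw z))
     \<le> (\<Prod>z\<in>Z. 1 - p_uv z - p_uw z + p_uvw z) - (\<Prod>z\<in>Z. (1 - p_uv z) * (1 - p_uw z))"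
  "(\<Prod>z\<in>Z. 1 - p_uv z - p_uw z + p_uvw z) - (\<Prod>z\<in>Z. (1 - p_uv z) * (1 - p_uw z))
     \<le> s_uvw - s_uv_uw"
proof -
  have "s_uvw - s_uv_uw = (\<Sum>z\<in>Z. (1 - p_uv z - p_uw z + p_uvw z) - (1 - p_uv z) * (1 - p_uw z))"
    by (simp add: s_uvw_def s_uv_uw_def algebra_simps sum_subtractf)
  then show "(s_uvw - s_uv_uw) * (\<Prod>z\<in>Z. (1 - p_uv z) * (1 - p_uw z))
      \<le> (\<Prod>z\<in>Z. 1 - p_uv z - p_uw z + p_uvw z) - (\<Prod>z\<in>Z. (1 - p_uv z) * (1 - p_uw z))"
    "(\<Prod>z\<in>Z. 1 - p_uv z - p_uw z + p_uvw z) - (\<Prod>z\<in>Z. (1 - p_uv z) * (1 - p_uw z))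
      \<le> s_uvw - s_uv_uw"
    using column_factor_bounds
    by (auto intro!: sum_diff_mult_prod_le_prod_diff prod_diff_le_sum_diff finite_Z)
qed

lemma prob_wedge_event_upper: "Pr wedge_event \<le> s_uv * s_uw + s_uvw"
proof -
  have "1 - (\<Prod>z\<in>Z. 1 - p z) \<le> sum p Z" "0 \<le> 1 - (\<Prod>z\<in>Z. 1 - p z)"
    if "\<And>z. z \<in> Z \<Longrightarrow> 0 \<le> p z \<and> p z \<le> 1" for p :: "'b \<Rightarrow> real"
    using that one_minus_sum_le_prod_one_minus[OF finite_Z, of p] by (auto intro!: prod_le_1)
  then have "(1 - (\<Prod>z\<in>Z. 1 - p_uv z)) * (1 - (\<Prod>z\<in>Z. 1 - p_uw z)) \<le> s_uv * s_uw"
    using p_bounds s_nonneg by (intro mult_mono) (auto simp: s_uv_def s_uw_def)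
  then show ?thesis
    unfolding prob_wedge_event using wedge_correlation_bounds(2) s_nonneg by linarith
qed

lemma prob_wedge_event_lower:
  assumes "s_uv \<le> 1" "s_uw \<le> 1"
  shows "s_uv * (1 - s_uv) * (s_uw * (1 - s_uw)) + (s_uvw - s_uv_uw) * (1 - s_uv - s_uw)
        \<le> Pr wedge_event"
proof -
  have "(\<Prod>z\<in>Z. 1 - p_uv z) \<le> 1" "(\<Prod>z\<in>Z. 1 - p_uw z) \<le> 1"
    using p_bounds by (auto intro!: prod_le_1)
  then have indep: "s_uv * (1 - s_uv) * (s_uw * (1 - s_uw))
      \<le> (1 - (\<Prod>z\<in>Z. 1 - p_uv z)) * (1 - (\<Prod>z\<in>Z. 1 - p_uw z))"
    using sum_mult_one_minus_sum_le[OF finite_Z] p_bounds assms s_nonneg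
    by (intro mult_mono) (auto simp: s_uv_def s_uw_def)
  have "1 - s_uv \<le> (\<Prod>z\<in>Z. 1 - p_uv z)" "1 - s_uw \<le> (\<Prod>z\<in>Z. 1 - p_uw z)"
    using one_minus_sum_le_prod_one_minus[OF finite_Z] p_bounds by (auto simp: s_uv_def s_uw_def)
  then have "(1 - s_uv) * (1 - s_uw) \<le> (\<Prod>z\<in>Z. (1 - p_uv z) * (1 - p_uw z))"
    using assms by (auto simp: prod.distrib intro!: mult_mono)
  moreover have "1 - s_uv - s_uw \<le> (1 - s_uv) * (1 - s_uw)"
    using s_nonneg by (simp add: algebra_simps)
  ultimately have "(s_uvw - s_uv_uw) * (1 - s_uv - s_uw)
      \<le> (s_uvw - s_uv_uw) * (\<Prod>z\<in>Z. (1 - p_uv z) * (1 - p_uw z))"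
    using s_nonneg by (intro mult_left_mono) auto
  then show ?thesis
    unfolding prob_wedge_event using indep wedge_correlation_bounds(1) by linarith
qed

lemma prob_triangle_event_lower: "s_uvw - s_uvw^2 / 2 \<le> Pr triangle_event"
proof -
  have "s_uvw - s_uvw^2 / 2 \<le> 1 - (\<Prod>z\<in>Z. 1 - p_uvw z)"
    using prod_one_minus_le_bonferroni[OF finite_Z, of p_uvw] p_uvw_range by (simp add: s_uvw_def)
  also have "\<dots> = Pr {f. common_neighbour {u, v, w} f}"
    using in_X distinct by (simp add: prob_common_neighbour p_uvw_def mult_ac)
  also have "\<dots> \<le> Pr triangle_event"
    by (rule measure_pmf.finite_measure_mono) (auto simp: triangle_event_def common_neighbour_def)
  finally show ?thesis .
qed

text \<open>Without a common neighbour of all three nodes, a triangle needs three distinct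
  right nodes closing a 6-cycle through u, v and w.\<close>

definition "hexagon = (\<lambda>(z1, z2, z3).
  {f. f (u, z1) \<and> f (v, z1) \<and> f (u, z2) \<and> f (w, z2) \<and> f (v, z3) \<and> f (w, z3)})"

definition "distinct_triples = {(z1, z2, z3) \<in> Z \<times> Z \<times> Z. z1 \<noteq> z2 \<and> z1 \<noteq> z3 \<and> z2 \<noteq> z3}"

lemma finite_distinct_triples: "finite distinct_triples"
  by (rule finite_subset[of _ "Z \<times> Z \<times> Z"]) (auto simp: distinct_triples_def finite_Z)

lemma triangle_event_subset:
  "triangle_event \<subseteq> {f. common_neighbour {u, v, w} f} \<union> (\<Union>t\<in>distinct_triples. hexagon t)"
proof
  fix f assume "f \<in> triangle_event"
  then obtain z1 z2 z3 where z: "z1 \<in> Z" "z2 \<in> Z" "z3 \<in> Z"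
    "f (u, z1)" "f (v, z1)" "f (u, z2)" "f (w, z2)" "f (v, z3)" "f (w, z3)"
    by (auto simp: triangle_event_def common_neighbour_def)
  show "f \<in> {f. common_neighbour {u, v, w} f} \<union> (\<Union>t\<in>distinct_triples. hexagon t)"
  proof (cases "z1 = z2 \<or> z1 = z3 \<or> z2 = z3")
    case True
    then show ?thesis using z by (auto simp: common_neighbour_def)
  next
    case False
    then have "(z1, z2, z3) \<in> distinct_triples" using z by (auto simp: distinct_triples_def)
    moreover have "f \<in> hexagon (z1, z2, z3)" using z by (auto simp: hexagon_def)
    ultimately show ?thesis by blast
  qed
qed

lemma prob_hexagon:
  assumes "(z1, z2, z3) \<in> distinct_triples"
  shows "Pr (hexagon (z1, z2, z3)) = p_uv z1 * p_uw z2 * p_vw z3"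
proof -
  let ?S = "{(u, z1), (v, z1), (u, z2), (w, z2), (v, z3), (w, z3)}"
  have z: "z1 \<in> Z" "z2 \<in> Z" "z3 \<in> Z" "z1 \<noteq> z2" "z1 \<noteq> z3" "z2 \<noteq> z3"
    using assms by (auto simp: distinct_triples_def)
  have "hexagon (z1, z2, z3) = {f. \<forall>e\<in>?S. f e}" by (auto simp: hexagon_def)
  also have "Pr \<dots> = (\<Prod>e\<in>?S. q e)"
    using z in_X by (intro prob_field_all) auto
  also have "\<dots> = p_uv z1 * p_uw z2 * p_vw z3"
    using z distinct by (simp add: p_uv_def p_uw_def p_vw_def mult_ac)
  finally show ?thesis .
qed

lemma prob_triangle_event_upper: "Pr triangle_event \<le> s_uvw + s_uv * s_uw * s_vw"
proof -
  have "Pr triangle_event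
      \<le> Pr ({f. common_neighbour {u, v, w} f} \<union> (\<Union>t\<in>distinct_triples. hexagon t))"
    by (rule measure_pmf.finite_measure_mono[OF triangle_event_subset]) simp
  also have "\<dots> \<le> Pr {f. common_neighbour {u, v, w} f}
      + Pr (\<Union>t\<in>distinct_triples. hexagon t)"
    unfolding measure_pmf_prob_Un by (simp add: measure_nonneg)
  also have "Pr {f. common_neighbour {u, v, w} f} = 1 - (\<Prod>z\<in>Z. 1 - p_uvw z)"
    using in_X distinct by (simp add: prob_common_neighbour p_uvw_def mult_ac)
  also have "\<dots> \<le> s_uvw"
    using one_minus_sum_le_prod_one_minus[OF finite_Z, of p_uvw] p_uvw_range
    by (simp add: s_uvw_def)
  also have "Pr (\<Union>t\<in>distinct_triples. hexagon t)
      \<le> (\<Sum>t\<in>distinct_triples. Pr (hexagon t))"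
    by (rule measure_pmf.finite_measure_subadditive_finite) (simp_all add: finite_distinct_triples)
  also have "\<dots> = (\<Sum>(z1, z2, z3)\<in>distinct_triples. p_uv z1 * p_uw z2 * p_vw z3)"
    by (intro sum.cong refl) (auto simp: prob_hexagon)
  also have "\<dots> \<le> (\<Sum>(z1, z2, z3)\<in>Z \<times> Z \<times> Z. p_uv z1 * p_uw z2 * p_vw z3)"
    using finite_Z p_bounds
    by (intro sum_mono2) (auto simp: distinct_triples_def intro!: mult_nonneg_nonneg)
  also have "\<dots> = (\<Sum>z1\<in>Z. p_uv z1 * (\<Sum>z2\<in>Z. p_uw z2 * (\<Sum>z3\<in>Z. p_vw z3)))"
    by (simp add: sum.cartesian_product[symmetric] sum_distrib_left mult.assoc)
  also have "\<dots> = s_uv * s_uw * s_vw"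
    by (simp add: sum_distrib_right mult.assoc s_uv_def s_uw_def s_vw_def)
  finally show ?thesis by simp
qed

lemma wedge_triangle_bounds:
  assumes "s_uv \<le> e" "s_uw \<le> e" "s_vw \<le> e" "e \<le> 1/2"
  shows "s_uvw * (1 - e) \<le> Pr triangle_event"
    and "Pr triangle_event \<le> s_uvw + s_uv * s_uw * e"
    and "(1 - 2 * e) * (s_uv * s_uw + s_uvw) - s_uv_uw \<le> Pr wedge_event"
    and "Pr wedge_event \<le> s_uv * s_uw + s_uvw"
proof -
  note s = s_nonneg
  have "s_uvw * s_uvw \<le> s_uvw * e"
    using s_uvw_le_s_uv assms s by (intro mult_left_mono) auto
  moreover have "0 \<le> s_uvw * e" using s assms by simp
  ultimately show "s_uvw * (1 - e) \<le> Pr triangle_event"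
    using prob_triangle_event_lower
    by (simp add: algebra_simps power2_eq_square)
  have "s_uv * s_uw * s_vw \<le> s_uv * s_uw * e"
    using assms s by (intro mult_left_mono) auto
  then show "Pr triangle_event \<le> s_uvw + s_uv * s_uw * e"
    using prob_triangle_event_upper by linarith
  show "Pr wedge_event \<le> s_uv * s_uw + s_uvw"
    by (rule prob_wedge_event_upper)
  have "(1 - s_uv) * (1 - s_uw) = 1 - s_uv - s_uw + s_uv * s_uw"
    by (simp add: algebra_simps)
  then have "1 - 2 * e \<le> (1 - s_uv) * (1 - s_uw)"
    using assms s mult_nonneg_nonneg[of s_uv s_uw] by linarith
  then have "s_uv * s_uw * (1 - 2 * e) \<le> s_uv * (1 - s_uv) * (s_uw * (1 - s_uw))"
    using s by (simp add: mult_left_mono mult_ac)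
  moreover have "(s_uvw - s_uv_uw) * (1 - 2 * e) \<le> (s_uvw - s_uv_uw) * (1 - s_uv - s_uw)"
    using assms s by (intro mult_left_mono) auto
  moreover have "(1 - 2 * e) * s_uv_uw \<le> s_uv_uw"
    using assms s by (simp add: mult_left_le_one_le)
  moreover have "s_uv \<le> 1" "s_uw \<le> 1" using assms by auto
  ultimately show "(1 - 2 * e) * (s_uv * s_uw + s_uvw) - s_uv_uw \<le> Pr wedge_event"
    using prob_wedge_event_lower by (simp add: algebra_simps)
qed

end

locale rank_one_wedge = wedge_field X Z q u v w
  for X :: "'a set" and Z :: "'b set" and q :: "'a \<times> 'b \<Rightarrow> real" and u v w +
  fixes a :: "'a \<Rightarrow> real" and b :: "'b \<Rightarrow> real"
  assumes q_rank_one: "\<And>x z. x \<in> X \<Longrightarrow> z \<in> Z \<Longrightarrow> q (x, z) = a x * b z"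
begin

lemma s_rank_one:
  "s_uv = a u * a v * (\<Sum>z\<in>Z. b z ^ 2)"
  "s_uw = a u * a w * (\<Sum>z\<in>Z. b z ^ 2)"
  "s_vw = a v * a w * (\<Sum>z\<in>Z. b z ^ 2)"
  "s_uvw = a u * a v * a w * (\<Sum>z\<in>Z. b z ^ 3)"
  "s_uv_uw = a u ^ 2 * a v * a w * (\<Sum>z\<in>Z. b z ^ 4)"
  unfolding s_uv_def s_uw_def s_vw_def s_uvw_def s_uv_uw_def p_uv_def p_uw_def p_vw_def p_uvw_def
  using in_X
  by (simp_all add: q_rank_one sum_distrib_left power2_eq_square power3_eq_cube power4_eq_xxxx
      mult_ac cong: sum.cong)

lemma s_le_codegree:
  assumes "\<And>x. x \<in> {u, v, w} \<Longrightarrow> 0 \<le> a x \<and> a x \<le> W"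
  shows "s_uv \<le> W^2 * (\<Sum>z\<in>Z. b z ^ 2)" "s_uw \<le> W^2 * (\<Sum>z\<in>Z. b z ^ 2)"
    "s_vw \<le> W^2 * (\<Sum>z\<in>Z. b z ^ 2)"
proof -
  have "a x * a y * (\<Sum>z\<in>Z. b z ^ 2) \<le> W^2 * (\<Sum>z\<in>Z. b z ^ 2)"
    if "x \<in> {u, v, w}" "y \<in> {u, v, w}" for x y
    using assms[OF that(1)] assms[OF that(2)]
    by (intro mult_right_mono) (auto simp: power2_eq_square intro!: mult_mono sum_nonneg)
  then show "s_uv \<le> W^2 * (\<Sum>z\<in>Z. b z ^ 2)" "s_uw \<le> W^2 * (\<Sum>z\<in>Z. b z ^ 2)"
    "s_vw \<le> W^2 * (\<Sum>z\<in>Z. b z ^ 2)"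
    by (simp_all add: s_rank_one)
qed

end

lemma ratio_approx:
  fixes g h h' e r X Y :: real
  assumes "0 < g" "0 \<le> h" "0 \<le> e" "0 \<le> r" "2 * e + r \<le> 1/2" "h' \<le> r * g"
    and X: "g * (1 - e) \<le> X" "X \<le> g + h * e"
    and Y: "(1 - 2 * e) * (g + h) - h' \<le> Y" "Y \<le> g + h"
  shows "\<bar>X / Y - g / (g + h)\<bar> \<le> 9 * e + 4 * r"
proof -
  define s where "s = g + h"
  define \<tau> where "\<tau> = g / s"
  define \<rho> where "\<rho> = 2 * e + r"
  have s: "0 < s" "g \<le> s" using assms by (simp_all add: s_def)
  have \<tau>: "0 \<le> \<tau>" "\<tau> \<le> 1" using s assms by (simp_all add: \<tau>_def)
  have \<rho>: "0 \<le> \<rho>" "\<rho> \<le> 1/2" using assms by (simp_all add: \<rho>_def)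
  have "s * (1 - \<rho>) = (1 - 2 * e) * (g + h) - r * g - r * h"
    by (simp add: s_def \<rho>_def algebra_simps)
  then have Y_lower: "s * (1 - \<rho>) \<le> Y"
    using assms Y mult_nonneg_nonneg[of r h] by linarith
  moreover have s\<rho>: "0 < s * (1 - \<rho>)" using s \<rho> by simp
  ultimately have "0 < Y" by linarith
  have "0 \<le> g * (1 - e)" using assms by simp
  then have "0 \<le> X" using X by linarith
  have "\<tau> * (1 - e) \<le> X / s" using X s by (simp add: \<tau>_def divide_right_mono)
  also have "\<dots> \<le> X / Y" using \<open>0 \<le> X\<close> \<open>0 < Y\<close> Y by (intro divide_left_mono) (auto simp: s_def)
  finally have lower: "\<tau> - e \<le> X / Y"
    using \<tau> \<open>0 \<le> e\<close> mult_right_le_one_le[of e \<tau>] by (simp add: algebra_simps)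
  have "X / Y \<le> X / (s * (1 - \<rho>))"
    using \<open>0 \<le> X\<close> Y_lower s\<rho> \<open>0 < Y\<close> by (intro divide_left_mono) auto
  also have "\<dots> \<le> (g + h * e) / (s * (1 - \<rho>))"
    using X s \<rho> by (intro divide_right_mono) auto
  also have "\<dots> = ((g + h * e) / s) / (1 - \<rho>)" by simp
  also have "(g + h * e) / s \<le> \<tau> + e"
    using s assms mult_right_mono[of h s e]
    by (simp add: \<tau>_def s_def add_divide_distrib divide_le_eq mult.commute)
  then have "((g + h * e) / s) / (1 - \<rho>) \<le> (\<tau> + e) / (1 - \<rho>)"
    using \<rho> by (intro divide_right_mono) auto
  also have "\<dots> \<le> (\<tau> + e) * (1 + 2 * \<rho>)"
  proof -
    have "\<rho> * (2 * \<rho>) \<le> \<rho> * 1" using \<rho> by (intro mult_left_mono) auto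
    then have "1 \<le> (1 + 2 * \<rho>) * (1 - \<rho>)" by (simp add: algebra_simps)
    then show ?thesis
      using \<tau> \<rho> assms
      by (simp add: divide_le_eq mult_left_mono[of 1 _ "\<tau> + e", simplified] mult.assoc)
  qed
  also have "\<dots> \<le> \<tau> + 9 * e + 4 * r"
    using \<tau> \<rho> assms mult_right_mono[of "\<tau> + e" "5/4" \<rho>] by (simp add: \<rho>_def algebra_simps)
  finally show ?thesis using lower assms by (simp add: \<tau>_def s_def abs_le_iff)
qed

definition power_sum :: "nat \<Rightarrow> (nat \<Rightarrow> real) \<Rightarrow> nat \<Rightarrow> real" where
  "power_sum n w k = (\<Sum>i<n. w i ^ k)"

lemma power_sum_pos: "0 < n \<Longrightarrow> (\<And>i. i < n \<Longrightarrow> 0 < w i) \<Longrightarrow> 0 < power_sum n w k"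
  unfolding power_sum_def by (intro sum_pos) auto

lemma moment_eq_power_sum: "moment n w k = power_sum n w k / n"
  by (simp add: moment_def power_sum_def)

text \<open>The expected number of common neighbours of two left nodes of weight at most W
  is at most this quantity, which is W^2 M2 / (n M1^2) in terms of moments.\<close>

definition codegree_bound :: "real \<Rightarrow> nat \<Rightarrow> (nat \<Rightarrow> real) \<Rightarrow> real" where
  "codegree_bound W n w = W^2 * power_sum n w 2 / power_sum n w 1 ^ 2"

definition bip_field :: "nat \<Rightarrow> nat \<Rightarrow> (nat \<Rightarrow> real) \<Rightarrow> (nat \<Rightarrow> real) \<Rightarrow> (nat \<times> nat \<Rightarrow> bool) pmf" where
  "bip_field nL nR wL wR =
     Pi_pmf ({..<nL} \<times> {..<nR}) False (\<lambda>(u, v). bernoulli_pmf (edge_prob nR wL wR u v))"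

definition wedge_prob :: "nat \<Rightarrow> nat \<Rightarrow> (nat \<Rightarrow> real) \<Rightarrow> (nat \<Rightarrow> real) \<Rightarrow> nat \<Rightarrow> nat \<Rightarrow> nat \<Rightarrow> real" where
  "wedge_prob nL nR wL wR u v w = measure_pmf.prob (bip_field nL nR wL wR)
     {f. (\<exists>z<nR. f (u, z) \<and> f (v, z)) \<and> (\<exists>z<nR. f (u, z) \<and> f (w, z))}"

definition triangle_prob :: "nat \<Rightarrow> nat \<Rightarrow> (nat \<Rightarrow> real) \<Rightarrow> (nat \<Rightarrow> real) \<Rightarrow> nat \<Rightarrow> nat \<Rightarrow> nat \<Rightarrow> real" where
  "triangle_prob nL nR wL wR u v w = measure_pmf.prob (bip_field nL nR wL wR)
     {f. (\<exists>z<nR. f (v, z) \<and> f (w, z)) \<and> (\<exists>z<nR. f (u, z) \<and> f (v, z))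
         \<and> (\<exists>z<nR. f (u, z) \<and> f (w, z))}"

lemma finite_wedges: "finite (wedges nL u)"
  by (rule finite_subset[of _ "{..<nL} \<times> {..<nL}"]) (auto simp: wedges_def)

lemma wedges_nonempty: "3 \<le> nL \<Longrightarrow> u < nL \<Longrightarrow> wedges nL u \<noteq> {}"
proof -
  assume "3 \<le> nL" "u < nL"
  then have "((u + 1) mod 3, (u + 2) mod 3) \<in> wedges nL u"
    unfolding wedges_def by auto presburger+
  then show ?thesis by auto
qed

lemma clust_eq_sum_ratio:
  assumes "wedges nL u \<noteq> {}"
  shows "clust nL nR wL wR u
       = (\<Sum>(v, w)\<in>wedges nL u. triangle_prob nL nR wL wR u v w)
         / (\<Sum>(v, w)\<in>wedges nL u. wedge_prob nL nR wL wR u v w)"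
proof -
  define B where "B = {((v, w), Eb). proj_edge nR Eb u v \<and> proj_edge nR Eb u w}"
  define A where "A = {((v, w), Eb). proj_edge nR Eb v w}"
  let ?G = "bip_graph nL nR wL wR"
  have G: "?G = map_pmf (\<lambda>f. {e. f e}) (bip_field nL nR wL wR)"
    unfolding bip_graph_def bip_field_def ..
  have "0 < card (wedges nL u)"
    using finite_wedges assms by (simp add: card_gt_0_iff)
  then have "clust nL nR wL wR u
      = (\<Sum>x\<in>wedges nL u. measure_pmf.prob ?G {E. (x, E) \<in> A \<inter> B})
        / (\<Sum>x\<in>wedges nL u. measure_pmf.prob ?G {E. (x, E) \<in> B})"
    unfolding clust_def wedge_graph_def Let_def A_def[symmetric] B_def[symmetric]
    by (simp add: measure_pmf_prob_pair_pmf_of_set[OF finite_wedges assms])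
  also have "\<dots> = (\<Sum>(v, w)\<in>wedges nL u. triangle_prob nL nR wL wR u v w)
        / (\<Sum>(v, w)\<in>wedges nL u. wedge_prob nL nR wL wR u v w)"
    by (intro arg_cong2[where f = "(/)"] sum.cong refl)
      (auto simp: wedges_def G A_def B_def proj_edge_def triangle_prob_def wedge_prob_def)
  finally show ?thesis .
qed

lemma wedge_triangle_prob_bounds:
  fixes nL nR :: nat and wL wR :: "nat \<Rightarrow> real" and u v w :: nat and W :: real
  assumes nR: "0 < nR" and u: "u < nL" and vw: "(v, w) \<in> wedges nL u"
    and wL_pos: "\<And>x. x < nL \<Longrightarrow> 0 < wL x" and wR_pos: "\<And>z. z < nR \<Longrightarrow> 0 < wR z"
    and prob_le_1: "\<And>x z. x < nL \<Longrightarrow> z < nR \<Longrightarrow> wL x * wR z / (real nR * moment nR wR 1) \<le> 1"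
    and W: "\<And>x. x < nL \<Longrightarrow> wL x \<le> W"
    and e_small: "codegree_bound W nR wR \<le> 1/2"
  defines "S \<equiv> power_sum nR wR" and "e \<equiv> codegree_bound W nR wR"
  defines "g \<equiv> wL u * S 3 / S 1 ^ 3"
    and "h \<equiv> wL u^2 * S 2 ^ 2 / S 1 ^ 4"
    and "h' \<equiv> wL u^2 * S 4 / S 1 ^ 4"
  shows "wL v * wL w * (g * (1 - e)) \<le> triangle_prob nL nR wL wR u v w"
    and "triangle_prob nL nR wL wR u v w \<le> wL v * wL w * (g + h * e)"
    and "wL v * wL w * ((1 - 2 * e) * (g + h) - h') \<le> wedge_prob nL nR wL wR u v w"
    and "wedge_prob nL nR wL wR u v w \<le> wL v * wL w * (g + h)"
proof -
  have S_pos: "0 < S k" for k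
    unfolding S_def using nR wR_pos by (rule power_sum_pos)
  have v: "v < nL" "v \<noteq> u" and w: "w < nL" "w \<noteq> u" and "v \<noteq> w"
    using vw by (auto simp: wedges_def)
  have ep: "edge_prob nR wL wR x z = wL x * (wR z / S 1)" if "x < nL" "z < nR" for x z
    using prob_le_1[OF that] nR by (simp add: edge_prob_def moment_eq_power_sum S_def)
  interpret P: rank_one_wedge "{..<nL}" "{..<nR}" "\<lambda>(x, z). edge_prob nR wL wR x z" u v w
    wL "\<lambda>z. wR z / S 1"
  proof
    fix x z assume "x \<in> {..<nL}" "z \<in> {..<nR}"
    then have "0 \<le> edge_prob nR wL wR x z"
      using ep[of x z] wL_pos[of x] wR_pos[of z] S_pos[of 1] by simp
    moreover have "edge_prob nR wL wR x z \<le> 1" by (simp add: edge_prob_def)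
    ultimately show "0 \<le> (case (x, z) of (x, z) \<Rightarrow> edge_prob nR wL wR x z)
        \<and> (case (x, z) of (x, z) \<Rightarrow> edge_prob nR wL wR x z) \<le> 1"
      by simp
  qed (use u v w \<open>v \<noteq> w\<close> ep in auto)
  have field: "P.field {..<nR} = bip_field nL nR wL wR"
    unfolding P.field_def bip_field_def by (simp add: case_prod_unfold)
  have triangle: "triangle_prob nL nR wL wR u v w = P.Pr P.triangle_event"
    unfolding triangle_prob_def field P.triangle_event_def P.common_neighbour_def
    by (intro arg_cong[where f = "measure_pmf.prob _"]) auto
  have wedge: "wedge_prob nL nR wL wR u v w = P.Pr P.wedge_event"
    unfolding wedge_prob_def field P.wedge_event_def P.common_neighbour_def
    by (intro arg_cong[where f = "measure_pmf.prob _"]) auto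
  have B: "(\<Sum>z\<in>{..<nR}. (wR z / S 1) ^ k) = S k / S 1 ^ k" for k
    by (simp add: S_def power_sum_def power_divide sum_divide_distrib)
  have weights: "0 \<le> wL x \<and> wL x \<le> W" if "x \<in> {u, v, w}" for x
    using W wL_pos u v w that by (auto intro: less_imp_le)
  have "W^2 * (\<Sum>z\<in>{..<nR}. (wR z / S 1) ^ 2) = e"
    unfolding B by (simp add: e_def codegree_bound_def S_def)
  note codegree = P.s_le_codegree[OF weights, unfolded this]
  note bounds = P.wedge_triangle_bounds[OF codegree e_small[folded e_def]]
  have s: "P.s_uvw = wL v * wL w * g" "P.s_uv * P.s_uw = wL v * wL w * h"
    "P.s_uv_uw = wL v * wL w * h'"
    unfolding P.s_rank_one B
    by (simp_all add: g_def h_def h'_def power2_eq_square power4_eq_xxxx mult_ac)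
  show "wL v * wL w * (g * (1 - e)) \<le> triangle_prob nL nR wL wR u v w"
    using bounds(1) by (simp add: triangle s mult.assoc)
  show "triangle_prob nL nR wL wR u v w \<le> wL v * wL w * (g + h * e)"
    using bounds(2) by (simp add: triangle s algebra_simps)
  show "wL v * wL w * ((1 - 2 * e) * (g + h) - h') \<le> wedge_prob nL nR wL wR u v w"
    using bounds(3) by (simp add: wedge s algebra_simps)
  show "wedge_prob nL nR wL wR u v w \<le> wL v * wL w * (g + h)"
    using bounds(4) by (simp add: wedge s algebra_simps)
qed

lemma power_sum_4_le:
  assumes "\<And>i. i < n \<Longrightarrow> 0 \<le> w i"
  shows "power_sum n w 4 \<le> sqrt (power_sum n w 2) * power_sum n w 3"
proof -
  have "w i \<le> sqrt (power_sum n w 2)" if "i < n" for i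
  proof -
    have "w i ^ 2 \<le> power_sum n w 2"
      unfolding power_sum_def using that assms by (intro member_le_sum) auto
    then show ?thesis using real_le_rsqrt by blast
  qed
  then have "w i ^ 3 * w i \<le> w i ^ 3 * sqrt (power_sum n w 2)" if "i < n" for i
    using assms that by (intro mult_left_mono) auto
  then have "power_sum n w 4 \<le> (\<Sum>i<n. sqrt (power_sum n w 2) * w i ^ 3)"
    unfolding power_sum_def
    by (intro sum_mono) (simp add: power3_eq_cube power4_eq_xxxx mult_ac)
  then show ?thesis by (simp add: power_sum_def sum_distrib_left)
qed

lemma clustering_limit_eq_ratio:
  assumes "0 < n" "\<And>i. i < n \<Longrightarrow> 0 < w i" "0 < x"
  defines "S \<equiv> power_sum n w"
  shows "1 / (1 + (moment n w 2)^2 / (moment n w 3 * moment n w 1) * x)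
       = (x * S 3 / S 1 ^ 3) / (x * S 3 / S 1 ^ 3 + x^2 * S 2 ^ 2 / S 1 ^ 4)"
proof -
  have S: "0 < S k" for k unfolding S_def using assms(1,2) by (rule power_sum_pos)
  have "1 / (1 + (S 2 / n)^2 / (S 3 / n * (S 1 / n)) * x) = S 3 * S 1 / (S 3 * S 1 + S 2 ^ 2 * x)"
    using S[of 1] S[of 2] S[of 3] assms by (simp add: field_simps power2_eq_square)
  also have "\<dots> = (x / S 1 ^ 4 * (S 3 * S 1)) / (x / S 1 ^ 4 * (S 3 * S 1 + S 2 ^ 2 * x))"
    using S[of 1] assms by simp
  also have "\<dots> = (x * S 3 / S 1 ^ 3) / (x * S 3 / S 1 ^ 3 + x^2 * S 2 ^ 2 / S 1 ^ 4)"
    using S[of 1] by (simp add: field_simps power2_eq_square power3_eq_cube power4_eq_xxxx)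
  finally show ?thesis by (simp add: moment_eq_power_sum S_def)
qed

lemma fourth_moment_term_le:
  assumes "0 < n" "\<And>i. i < n \<Longrightarrow> 0 < w i" "0 < x" "x \<le> W"
  defines "S \<equiv> power_sum n w"
  shows "x^2 * S 4 / S 1 ^ 4 \<le> sqrt (codegree_bound W n w) * (x * S 3 / S 1 ^ 3)"
proof -
  have S: "0 < S k" for k unfolding S_def using assms(1,2) by (rule power_sum_pos)
  have "sqrt (codegree_bound W n w) = W * sqrt (S 2) / S 1"
    using S[of 1] assms(3,4)
    by (simp add: codegree_bound_def S_def real_sqrt_mult real_sqrt_divide)
  moreover have "x * S 4 \<le> W * (sqrt (S 2) * S 3)"
    using assms power_sum_4_le[of n w] S[of 4]
    by (intro mult_mono) (auto simp: S_def less_imp_le)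
  then have "x * (x * S 4) / S 1 ^ 4 \<le> x * (W * (sqrt (S 2) * S 3)) / S 1 ^ 4"
    using assms(3) by (intro divide_right_mono mult_left_mono) auto
  ultimately show ?thesis
    by (simp add: power2_eq_square power3_eq_cube power4_eq_xxxx mult_ac)
qed

lemma clust_approx:
  fixes nL nR :: nat and wL wR :: "nat \<Rightarrow> real" and u :: nat and W :: real
  assumes nR: "0 < nR" and nL: "3 \<le> nL" and u: "u < nL"
    and wL_pos: "\<And>x. x < nL \<Longrightarrow> 0 < wL x" and wR_pos: "\<And>z. z < nR \<Longrightarrow> 0 < wR z"
    and prob_le_1: "\<And>x z. x < nL \<Longrightarrow> z < nR \<Longrightarrow> wL x * wR z / (real nR * moment nR wR 1) \<le> 1"
    and W: "\<And>x. x < nL \<Longrightarrow> wL x \<le> W"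
  defines "e \<equiv> codegree_bound W nR wR"
  assumes small: "e \<le> 1/36"
  shows "\<bar>clust nL nR wL wR u
           - 1 / (1 + (moment nR wR 2)^2 / (moment nR wR 3 * moment nR wR 1) * wL u)\<bar>
         \<le> 9 * e + 4 * sqrt e"
proof -
  define S where "S = power_sum nR wR"
  define g where "g = wL u * S 3 / S 1 ^ 3"
  define h where "h = wL u^2 * S 2 ^ 2 / S 1 ^ 4"
  define h' where "h' = wL u^2 * S 4 / S 1 ^ 4"
  define \<Omega> where "\<Omega> = (\<Sum>(v, w)\<in>wedges nL u. wL v * wL w)"
  let ?X = "\<Sum>(v, w)\<in>wedges nL u. triangle_prob nL nR wL wR u v w"
  let ?Y = "\<Sum>(v, w)\<in>wedges nL u. wedge_prob nL nR wL wR u v w"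
  have S: "0 < S k" for k unfolding S_def using nR wR_pos by (rule power_sum_pos)
  have "0 < wL u" using wL_pos u by simp
  have wedges: "wedges nL u \<noteq> {}" using nL u by (rule wedges_nonempty)
  have "0 < \<Omega>" unfolding \<Omega>_def
    by (rule sum_pos[OF finite_wedges wedges]) (auto simp: wedges_def wL_pos)
  have "0 \<le> e" unfolding e_def codegree_bound_def S_def[symmetric] using S[of 2] by simp
  moreover have "sqrt e \<le> 1/6"
    using real_sqrt_le_mono[OF small] by (simp add: real_sqrt_divide)
  ultimately have e: "0 \<le> e" "e \<le> 1/2" "2 * e + sqrt e \<le> 1/2" using small by linarith+
  have bounds:
    "wL v * wL w * (g * (1 - e)) \<le> triangle_prob nL nR wL wR u v w"
    "triangle_prob nL nR wL wR u v w \<le> wL v * wL w * (g + h * e)"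
    "wL v * wL w * ((1 - 2 * e) * (g + h) - h') \<le> wedge_prob nL nR wL wR u v w"
    "wedge_prob nL nR wL wR u v w \<le> wL v * wL w * (g + h)"
    if "(v, w) \<in> wedges nL u" for v w
    using wedge_triangle_prob_bounds[OF nR u that wL_pos wR_pos prob_le_1 W] e(2)
    unfolding e_def S_def g_def h_def h'_def by simp_all
  have X: "g * (1 - e) \<le> ?X / \<Omega>" "?X / \<Omega> \<le> g + h * e"
    using \<open>0 < \<Omega>\<close> bounds(1,2) unfolding \<Omega>_def
    by (auto split: prod.splits intro!: le_sum_divide_sum sum_divide_sum_le)
  have Y: "(1 - 2 * e) * (g + h) - h' \<le> ?Y / \<Omega>" "?Y / \<Omega> \<le> g + h"
    using \<open>0 < \<Omega>\<close> bounds(3,4) unfolding \<Omega>_def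
    by (auto split: prod.splits intro!: le_sum_divide_sum sum_divide_sum_le)
  have "h' \<le> sqrt e * g"
    unfolding h'_def g_def e_def S_def using nR wR_pos \<open>0 < wL u\<close> W[OF u]
    by (rule fourth_moment_term_le)
  then have "\<bar>(?X / \<Omega>) / (?Y / \<Omega>) - g / (g + h)\<bar> \<le> 9 * e + 4 * sqrt e"
    using X Y e S \<open>0 < wL u\<close>
    by (intro ratio_approx) (auto simp: g_def h_def)
  moreover have "(?X / \<Omega>) / (?Y / \<Omega>) = clust nL nR wL wR u"
    using \<open>0 < \<Omega>\<close> by (simp add: clust_eq_sum_ratio[OF wedges])
  ultimately show ?thesis
    using clustering_limit_eq_ratio[OF nR wR_pos \<open>0 < wL u\<close>] by (simp add: g_def h_def S_def)
qed

lemma codegree_bound_le_powr: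
  fixes n :: nat and w :: "nat \<Rightarrow> real" and W c1 c2 \<delta> :: real
  assumes "0 < n" "\<And>i. i < n \<Longrightarrow> 0 < w i" "0 \<le> W"
    and W: "W \<le> c1 * real n powr (1/2 - \<delta>)"
    and M2: "moment n w 2 \<le> c2 * (moment n w 1)^2"
  shows "codegree_bound W n w \<le> c1^2 * c2 * real n powr (-2 * \<delta>)"
proof -
  have M: "0 < moment n w k" for k
    using assms(1,2) power_sum_pos[of n w k] by (simp add: moment_eq_power_sum)
  have "codegree_bound W n w = W^2 * moment n w 2 / (n * (moment n w 1)^2)"
    using assms(1) by (simp add: codegree_bound_def moment_eq_power_sum power2_eq_square)
  also have "\<dots> \<le> (c1 * real n powr (1/2 - \<delta>))^2 * (c2 * (moment n w 1)^2) / (n * (moment n w 1)^2)"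
    using assms M[of 1] M[of 2]
    by (intro divide_right_mono mult_mono power_mono) auto
  also have "\<dots> = c1^2 * c2 * (real n powr (1 - 2 * \<delta>) / real n powr 1)"
  proof -
    have "real n powr (1/2 - \<delta>) * real n powr (1/2 - \<delta>) = real n powr (1 - 2 * \<delta>)"
      by (simp add: powr_add[symmetric])
    then show ?thesis using assms(1) M[of 1] by (simp add: power2_eq_square)
  qed
  also have "real n powr (1 - 2 * \<delta>) / real n powr 1 = real n powr (-2 * \<delta>)"
    by (subst powr_diff[symmetric]) simp
  finally show ?thesis .
qed

lemma codegree_bound_tendsto_zero:
  fixes n :: "nat \<Rightarrow> nat" and w :: "nat \<Rightarrow> nat \<Rightarrow> real" and W :: "nat \<Rightarrow> real" and \<delta> :: real
  assumes n: "filterlim n at_top sequentially"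
    and w_pos: "\<And>N i. i < n N \<Longrightarrow> 0 < w N i" and W_nonneg: "\<And>N. 0 \<le> W N" and "0 < \<delta>"
    and W: "W \<in> O(\<lambda>N. real (n N) powr (1/2 - \<delta>))"
    and M2: "(\<lambda>N. moment (n N) (w N) 2) \<in> O(\<lambda>N. (moment (n N) (w N) 1)^2)"
  shows "(\<lambda>N. codegree_bound (W N) (n N) (w N)) \<longlonglongrightarrow> 0"
proof -
  obtain c1 where c1:
    "eventually (\<lambda>N. norm (W N) \<le> c1 * norm (real (n N) powr (1/2 - \<delta>))) sequentially"
    using W by (elim landau_o.bigE)
  obtain c2 where c2: "eventually (\<lambda>N.
      norm (moment (n N) (w N) 2) \<le> c2 * norm ((moment (n N) (w N) 1)^2)) sequentially"
    using M2 by (elim landau_o.bigE)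
  have "eventually (\<lambda>N. 1 \<le> n N) sequentially"
    using n by (simp add: filterlim_at_top)
  then have upper: "eventually (\<lambda>N.
      codegree_bound (W N) (n N) (w N) \<le> c1^2 * c2 * real (n N) powr (-2 * \<delta>)) sequentially"
    using c1 c2
  proof eventually_elim
    case (elim N)
    then show ?case
      using W_nonneg w_pos by (intro codegree_bound_le_powr) (auto dest: abs_le_D1)
  qed
  have lower: "eventually (\<lambda>N. 0 \<le> codegree_bound (W N) (n N) (w N)) sequentially"
    by (simp add: codegree_bound_def power_sum_def sum_nonneg)
  have "filterlim (\<lambda>N. real (n N)) at_top sequentially"
    using filterlim_compose[OF filterlim_real_sequentially n] .
  then have "(\<lambda>N. c1^2 * c2 * real (n N) powr (-2 * \<delta>)) \<longlonglongrightarrow> 0"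
    using \<open>0 < \<delta>\<close> by (intro tendsto_mult_right_zero tendsto_neg_powr) auto
  with lower upper show ?thesis by (rule tendsto_sandwich[OF _ _ tendsto_const])
qed

theorem mainTheorem10:
  fixes nL nR :: "nat \<Rightarrow> nat"
    and wL wR :: "nat \<Rightarrow> nat \<Rightarrow> real"
    and \<delta> :: real
    and u :: "nat \<Rightarrow> nat"
  assumes nL_lim: "filterlim nL at_top sequentially"
    and nR_lim: "filterlim nR at_top sequentially"
    and wL_pos: "\<And>N x. x < nL N \<Longrightarrow> wL N x > 0"
    and wR_pos: "\<And>N y. y < nR N \<Longrightarrow> wR N y > 0"
    and assm1: "\<And>N x y. x < nL N \<Longrightarrow> y < nR N \<Longrightarrow>
                 wL N x * wR N y / (real (nR N) * moment (nR N) (wR N) 1) \<le> 1"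
    and delta: "\<delta> > 1/10"
    and max_bound: "(\<lambda>N. Max (wL N ` {..<nL N} \<union> wR N ` {..<nR N}))
                      \<in> O(\<lambda>N. real (nR N) powr (1/2 - \<delta>))"
    and min_bound: "(\<lambda>N. Min (wL N ` {..<nL N})) \<in> \<Omega>(\<lambda>N. 1)"
    and MR2: "(\<lambda>N. moment (nR N) (wR N) 2) \<in> O(\<lambda>N. (moment (nR N) (wR N) 1)^2)"
    and MR4: "(\<lambda>N. moment (nR N) (wR N) 4) \<in> O(\<lambda>N. real (nR N) powr (1 - 2*\<delta>))"
    and u_in: "\<And>N. u N < nL N"
  shows "(\<lambda>N. clust (nL N) (nR N) (wL N) (wR N) (u N)
            - 1 / (1 + (moment (nR N) (wR N) 2)^2
                       / (moment (nR N) (wR N) 3 * moment (nR N) (wR N) 1) * wL N (u N)))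
         \<longlonglongrightarrow> 0"
proof -
  define W where "W N = Max (wL N ` {..<nL N} \<union> wR N ` {..<nR N})" for N
  define e where "e N = codegree_bound (W N) (nR N) (wR N)" for N
  have W_ge: "wL N x \<le> W N" if "x < nL N" for N x
    unfolding W_def using that by (intro Max_ge) auto
  have W_nonneg: "0 \<le> W N" for N
    using W_ge[OF u_in] wL_pos[OF u_in] by (meson less_imp_le order_trans)
  have e_lim: "e \<longlonglongrightarrow> 0"
    unfolding e_def
  proof (rule codegree_bound_tendsto_zero[of nR wR W \<delta>])
    show "0 < \<delta>" using delta by simp
    show "W \<in> O(\<lambda>N. real (nR N) powr (1/2 - \<delta>))" using max_bound unfolding W_def[abs_def] .
  qed (use nR_lim wR_pos W_nonneg MR2 in auto)
  have "(\<lambda>N. sqrt (e N)) \<longlonglongrightarrow> 0"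
    using tendsto_real_sqrt[OF e_lim] by simp
  then have error_lim: "(\<lambda>N. 9 * e N + 4 * sqrt (e N)) \<longlonglongrightarrow> 0"
    using tendsto_add[OF tendsto_mult_right_zero[OF e_lim] tendsto_mult_right_zero] by simp
  have "eventually (\<lambda>N. 1 \<le> nR N) sequentially" "eventually (\<lambda>N. 3 \<le> nL N) sequentially"
    using nR_lim nL_lim by (simp_all add: filterlim_at_top)
  moreover have "eventually (\<lambda>N. e N \<le> 1/36) sequentially"
    using order_tendstoD(2)[OF e_lim, of "1/36"] by (simp add: eventually_mono)
  ultimately have "eventually (\<lambda>N. norm (clust (nL N) (nR N) (wL N) (wR N) (u N)
            - 1 / (1 + (moment (nR N) (wR N) 2)^2
                       / (moment (nR N) (wR N) 3 * moment (nR N) (wR N) 1) * wL N (u N)))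
          \<le> 9 * e N + 4 * sqrt (e N)) sequentially"
  proof eventually_elim
    case (elim N)
    show ?case
      unfolding real_norm_def e_def
      by (rule clust_approx) (use elim u_in wL_pos wR_pos assm1 W_ge in \<open>simp_all add: e_def\<close>)
  qed
  then show ?thesis using error_lim by (rule Lim_null_comparison)
qed

end
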